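(* Every consistent piece-wise quadratic function is semi-consistent.
   Context: A continuous $g$ is piece-wise quadratic with $N$ pieces if there exist breakpoints $-\infty=\tau_0<\tau_1<\dots<\tau_N=+\infty$ and quadratic $p_1,\dots,p_N$ with $g=p_k$ on $[\tau_{k-1},\tau_k]$ and $p_k\ne p_{k+1}$ as functions; it is consistent if every $p_k$ is strongly convex and $g=\min_kp_k$ on $\mathbb{R}$. For piece-wise quadratic $h$ with strongly convex pieces and breakpoints $\tau_k$, the indexing function is $I_h(\beta)=\min\{k:\ \exists\,\alpha^\star\in\arg\max_\alpha\{\beta\alpha-h(\alpha)\}\text{ with }\tau_{k-1}\le\alpha^\star\le\tau_k\}$. A piece-wise quadratic $g$ with breakpoints $\tau_0,\dots,\tau_N$ and pieces $p_1,\dots,p_N$ is semi-consistent if: (i) $p_1,\dots,p_N$ are strongly convex; (ii) $p_k(\alpha)\le\min\{p_{k-1}(\alpha),p_{k+1}(\alpha)\}$ for all $\alpha\in[\tau_{k-1},\tau_k]$ and $2\le k\le N-1$; (iii) for every $k\le N$, the indexing function $I_{g_k}$ is non-decreasing, where $g_k(\alpha)=g(\alpha)$ for $\alpha\le\tau_k$ and $g_k(\alpha)=p_k(\alpha)$ for $\alpha>\tau_k$ (so $g_k$ has pieces $p_1,\dots,p_k$ and breakpoints $\tau_0,\dots,\tau_{k-1},+\infty$). *)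

theory Defs
  imports "HOL-Analysis.Analysis"
begin

definition quadratic :: "(real \<Rightarrow> real) \<Rightarrow> bool" where
  "quadratic f \<longleftrightarrow> (\<exists>a b c. \<forall>x. f x = a * x^2 + b * x + c)"

definition strongly_convex :: "(real \<Rightarrow> real) \<Rightarrow> bool" where
  "strongly_convex f \<longleftrightarrow> (\<exists>\<mu>>0. convex_on UNIV (\<lambda>x. f x - \<mu> / 2 * x^2))"

text \<open>Breakpoints: tau_0 = -infinity and tau_N = +infinity are implicit; the finite
  breakpoints are tau 1 < ... < tau (N-1).\<close>
definition in_piece :: "nat \<Rightarrow> (nat \<Rightarrow> real) \<Rightarrow> nat \<Rightarrow> real \<Rightarrow> bool" where
  "in_piece N \<tau> k \<alpha> \<longleftrightarrow> (k = 1 \<or> \<tau> (k - 1) \<le> \<alpha>) \<and> (k = N \<or> \<alpha> \<le> \<tau> k)"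

definition piecewise_quadratic ::
  "(real \<Rightarrow> real) \<Rightarrow> nat \<Rightarrow> (nat \<Rightarrow> real) \<Rightarrow> (nat \<Rightarrow> real \<Rightarrow> real) \<Rightarrow> bool" where
  "piecewise_quadratic g N \<tau> p \<longleftrightarrow>
     N \<ge> 1 \<and> continuous_on UNIV g \<and>
     (\<forall>k. 1 \<le> k \<and> k + 1 \<le> N - 1 \<longrightarrow> \<tau> k < \<tau> (k + 1)) \<and>
     (\<forall>k\<in>{1..N}. quadratic (p k)) \<and>
     (\<forall>k\<in>{1..N}. \<forall>\<alpha>. in_piece N \<tau> k \<alpha> \<longrightarrow> g \<alpha> = p k \<alpha>) \<and>
     (\<forall>k. 1 \<le> k \<and> k < N \<longrightarrow> p k \<noteq> p (k + 1))"

definition consistent ::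
  "(real \<Rightarrow> real) \<Rightarrow> nat \<Rightarrow> (nat \<Rightarrow> real) \<Rightarrow> (nat \<Rightarrow> real \<Rightarrow> real) \<Rightarrow> bool" where
  "consistent g N \<tau> p \<longleftrightarrow>
     piecewise_quadratic g N \<tau> p \<and>
     (\<forall>k\<in>{1..N}. strongly_convex (p k)) \<and>
     (\<forall>\<alpha>. g \<alpha> = Min ((\<lambda>k. p k \<alpha>) ` {1..N}))"

definition indexing ::
  "nat \<Rightarrow> (nat \<Rightarrow> real) \<Rightarrow> (real \<Rightarrow> real) \<Rightarrow> real \<Rightarrow> nat" where
  "indexing M \<tau> h \<beta> = (LEAST k. 1 \<le> k \<and> k \<le> M \<and>
      (\<exists>\<alpha>. (\<forall>a. \<beta> * a - h a \<le> \<beta> * \<alpha> - h \<alpha>) \<and> in_piece M \<tau> k \<alpha>))"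

definition truncate ::
  "(real \<Rightarrow> real) \<Rightarrow> nat \<Rightarrow> (nat \<Rightarrow> real) \<Rightarrow> (nat \<Rightarrow> real \<Rightarrow> real) \<Rightarrow> nat \<Rightarrow> real \<Rightarrow> real" where
  "truncate g N \<tau> p k \<alpha> = (if k < N \<and> \<tau> k < \<alpha> then p k \<alpha> else g \<alpha>)"

definition semi_consistent ::
  "(real \<Rightarrow> real) \<Rightarrow> nat \<Rightarrow> (nat \<Rightarrow> real) \<Rightarrow> (nat \<Rightarrow> real \<Rightarrow> real) \<Rightarrow> bool" where
  "semi_consistent g N \<tau> p \<longleftrightarrow>
     piecewise_quadratic g N \<tau> p \<and>
     (\<forall>k\<in>{1..N}. strongly_convex (p k)) \<and>
     (\<forall>k. 2 \<le> k \<and> k \<le> N - 1 \<longrightarrow>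
        (\<forall>\<alpha>. \<tau> (k - 1) \<le> \<alpha> \<and> \<alpha> \<le> \<tau> k \<longrightarrow>
           p k \<alpha> \<le> min (p (k - 1) \<alpha>) (p (k + 1) \<alpha>))) \<and>
     (\<forall>k\<in>{1..N}. mono (indexing k \<tau> (truncate g N \<tau> p k)))"

end

theory Submission
  imports Defs
begin

text \<open>Condition (ii) is immediate from consistency: on its own interval \<open>g = p\<^sub>k\<close>, and \<open>g\<close> is the
  minimum of all pieces.  Condition (iii) holds for every truncation \<open>g\<^sub>k\<close> of any piece-wise
  quadratic function with strongly convex pieces.  On each (closed, nonempty) interval,
  \<open>\<beta> \<alpha> - p\<^sub>j \<alpha>\<close> is a concave parabola and attains its maximum, hence so does \<open>\<beta> \<alpha> - g\<^sub>k \<alpha>\<close>.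
  Adding the optimality inequalities for \<open>\<beta>\<^sub>1 < \<beta>\<^sub>2\<close> shows that maximisers move to the right
  as \<open>\<beta>\<close> grows, and therefore so does the first piece containing a maximiser.\<close>

lemma strongly_convex_quadratic_leading_coeff_pos:
  assumes "quadratic f" "strongly_convex f"
  shows "\<exists>A B C. A > 0 \<and> (\<forall>x. f x = A * x^2 + B * x + C)"
proof -
  obtain a b c where f: "\<And>x. f x = a * x^2 + b * x + c"
    using assms(1) unfolding quadratic_def by blast
  obtain \<mu> where "\<mu> > 0" and cv: "convex_on UNIV (\<lambda>x. f x - \<mu> / 2 * x^2)"
    using assms(2) unfolding strongly_convex_def by blast
  have "f 0 \<le> (f (-1) - \<mu> / 2) / 2 + (f 1 - \<mu> / 2) / 2"
    using convex_onD[OF cv, of "1/2" "-1" 1] by simp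
  then have "\<mu> / 2 \<le> a"
    by (simp add: f field_simps)
  with \<open>\<mu> > 0\<close> have "a > 0"
    by linarith
  with f show ?thesis
    by blast
qed

text \<open>Completing the square, the maximiser is the point of \<open>S\<close> nearest to the vertex.\<close>
lemma concave_quadratic_attains_max:
  fixes S :: "real set"
  assumes "A > 0" "closed S" "S \<noteq> {}"
  shows "\<exists>c\<in>S. \<forall>x\<in>S. \<beta> * x - (A * x^2 + B * x + C) \<le> \<beta> * c - (A * c^2 + B * c + C)"
proof -
  define v where "v = (\<beta> - B) / (2 * A)"
  have square: "\<beta> * x - (A * x^2 + B * x + C) = A * v^2 - C - A * (dist v x)^2" for x
    using \<open>A > 0\<close> by (simp add: v_def dist_real_def power2_eq_square field_simps)
  obtain c where "c \<in> S" and near: "\<And>x. x \<in> S \<Longrightarrow> dist v c \<le> dist v x"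
    using distance_attains_inf[OF assms(2,3)] by blast
  have "A * (dist v c)^2 \<le> A * (dist v x)^2" if "x \<in> S" for x
    using near[OF that] \<open>A > 0\<close> by (simp add: power_mono)
  with \<open>c \<in> S\<close> show ?thesis
    unfolding square by fastforce
qed

lemma closed_piece: "closed {\<alpha>. in_piece N \<tau> k \<alpha>}"
  unfolding in_piece_def
  by (intro closed_Collect_conj closed_Collect_disj closed_Collect_const
      closed_Collect_le continuous_intros)

lemma first_piece_containing:
  assumes "1 \<le> k"
  obtains i where "1 \<le> i" "i \<le> k" "in_piece k \<tau> i a"
    "\<And>j. 1 \<le> j \<Longrightarrow> j = k \<or> a \<le> \<tau> j \<Longrightarrow> i \<le> j"
proof -
  define P where "P i \<longleftrightarrow> 1 \<le> i \<and> (i = k \<or> a \<le> \<tau> i)" for i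
  define i where "i = (LEAST i. P i)"
  have "P k"
    using assms by (simp add: P_def)
  then have "P i" "i \<le> k"
    unfolding i_def by (auto intro: LeastI Least_le)
  have least: "i \<le> j" if "1 \<le> j" "j = k \<or> a \<le> \<tau> j" for j
    using that unfolding i_def P_def by (auto intro: Least_le)
  have "i = 1 \<or> \<tau> (i - 1) \<le> a"
  proof (rule ccontr)
    assume "\<not> (i = 1 \<or> \<tau> (i - 1) \<le> a)"
    then have "i \<le> i - 1"
      using \<open>P i\<close> least[of "i - 1"] by (auto simp: P_def)
    with \<open>P i\<close> show False
      unfolding P_def by linarith
  qed
  with \<open>P i\<close> have "in_piece k \<tau> i a"
    by (auto simp: in_piece_def P_def)
  with \<open>P i\<close> \<open>i \<le> k\<close> least show thesis
    using that by (auto simp: P_def)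
qed

lemma piecewise_conjugate_attains_max:
  fixes h :: "real \<Rightarrow> real" and q :: "nat \<Rightarrow> real \<Rightarrow> real"
  assumes "1 \<le> k"
    and h: "\<And>j a. j \<in> {1..k} \<Longrightarrow> in_piece k \<tau> j a \<Longrightarrow> h a = q j a"
    and q: "\<And>j. j \<in> {1..k} \<Longrightarrow> quadratic (q j) \<and> strongly_convex (q j)"
    and nonempty: "\<And>j. j \<in> {1..k} \<Longrightarrow> \<exists>\<alpha>. in_piece k \<tau> j \<alpha>"
  obtains \<alpha> where "\<And>a. \<beta> * a - h a \<le> \<beta> * \<alpha> - h \<alpha>"
proof -
  have "\<forall>j\<in>{1..k}. \<exists>c. in_piece k \<tau> j c \<and>
      (\<forall>x. in_piece k \<tau> j x \<longrightarrow> \<beta> * x - q j x \<le> \<beta> * c - q j c)"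
  proof
    fix j assume j: "j \<in> {1..k}"
    from q[OF j] have "quadratic (q j)" "strongly_convex (q j)"
      by auto
    then obtain A B C where "A > 0" and qj: "\<And>x. q j x = A * x^2 + B * x + C"
      using strongly_convex_quadratic_leading_coeff_pos by blast
    have "{\<alpha>. in_piece k \<tau> j \<alpha>} \<noteq> {}"
      using nonempty[OF j] by blast
    from concave_quadratic_attains_max[OF \<open>A > 0\<close> closed_piece this]
    show "\<exists>c. in_piece k \<tau> j c \<and>
        (\<forall>x. in_piece k \<tau> j x \<longrightarrow> \<beta> * x - q j x \<le> \<beta> * c - q j c)"
      unfolding qj by blast
  qed
  then obtain c where c: "\<forall>j\<in>{1..k}. in_piece k \<tau> j (c j) \<and>
      (\<forall>x. in_piece k \<tau> j x \<longrightarrow> \<beta> * x - q j x \<le> \<beta> * c j - q j (c j))"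
    by (rule bchoice[THEN exE])
  define val where "val j = \<beta> * c j - q j (c j)" for j
  have fin: "finite (val ` {1..k})" "val ` {1..k} \<noteq> {}"
    using \<open>1 \<le> k\<close> by auto
  from Max_in[OF fin] obtain j0 where j0_Max: "Max (val ` {1..k}) = val j0" and j0: "j0 \<in> {1..k}"
    by (rule imageE)
  have j0_max: "val j \<le> val j0" if "j \<in> {1..k}" for j
    using that fin by (simp flip: j0_Max)
  have "\<beta> * a - h a \<le> \<beta> * c j0 - h (c j0)" for a
  proof -
    obtain i where "1 \<le> i" "i \<le> k" "in_piece k \<tau> i a"
      by (rule first_piece_containing[OF \<open>1 \<le> k\<close>])
    then have i: "i \<in> {1..k}" "in_piece k \<tau> i a"
      by auto
    have "\<beta> * a - h a = \<beta> * a - q i a"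
      using h[OF i] by simp
    also have "\<dots> \<le> val i"
      using c i by (simp add: val_def)
    also have "\<dots> \<le> val j0"
      using j0_max[OF i(1)] .
    also have "\<dots> = \<beta> * c j0 - h (c j0)"
      using h[OF j0] c j0 by (simp add: val_def)
    finally show ?thesis .
  qed
  then show thesis
    using that by blast
qed

lemma conjugate_argmax_mono:
  fixes h :: "real \<Rightarrow> real"
  assumes "\<beta>1 < \<beta>2"
    and max1: "\<And>a. \<beta>1 * a - h a \<le> \<beta>1 * \<alpha>1 - h \<alpha>1"
    and max2: "\<And>a. \<beta>2 * a - h a \<le> \<beta>2 * \<alpha>2 - h \<alpha>2"
  shows "\<alpha>1 \<le> \<alpha>2"
proof -
  have "(\<beta>2 - \<beta>1) * (\<alpha>1 - \<alpha>2) \<le> 0"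
    using max1[of \<alpha>2] max2[of \<alpha>1] by (simp add: algebra_simps)
  with \<open>\<beta>1 < \<beta>2\<close> show ?thesis
    by (simp add: mult_le_0_iff)
qed

lemma mono_indexing:
  fixes h :: "real \<Rightarrow> real"
  assumes "1 \<le> k" and attained: "\<And>\<beta>. \<exists>\<alpha>. \<forall>a. \<beta> * a - h a \<le> \<beta> * \<alpha> - h \<alpha>"
  shows "mono (indexing k \<tau> h)"
proof (rule monoI)
  fix \<beta>1 \<beta>2 :: real
  assume "\<beta>1 \<le> \<beta>2"
  define P where "P \<beta> j \<longleftrightarrow> 1 \<le> j \<and> j \<le> k \<and>
      (\<exists>\<alpha>. (\<forall>a. \<beta> * a - h a \<le> \<beta> * \<alpha> - h \<alpha>) \<and> in_piece k \<tau> j \<alpha>)" for \<beta> j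
  have indexing_eq: "indexing k \<tau> h \<beta> = (LEAST j. P \<beta> j)" for \<beta>
    by (simp add: indexing_def P_def)
  show "indexing k \<tau> h \<beta>1 \<le> indexing k \<tau> h \<beta>2"
  proof (cases "\<beta>1 = \<beta>2")
    case False
    with \<open>\<beta>1 \<le> \<beta>2\<close> have "\<beta>1 < \<beta>2"
      by simp
    have "\<exists>j. P \<beta>2 j"
    proof -
      obtain \<alpha> where "\<forall>a. \<beta>2 * a - h a \<le> \<beta>2 * \<alpha> - h \<alpha>"
        using attained by blast
      moreover obtain i where "1 \<le> i" "i \<le> k" "in_piece k \<tau> i \<alpha>"
        using first_piece_containing[OF \<open>1 \<le> k\<close>] by blast
      ultimately show ?thesis
        unfolding P_def by blast
    qed
    then have "P \<beta>2 (indexing k \<tau> h \<beta>2)"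
      unfolding indexing_eq by (rule LeastI_ex)
    then obtain \<alpha>2 where max2: "\<forall>a. \<beta>2 * a - h a \<le> \<beta>2 * \<alpha>2 - h \<alpha>2"
      and piece2: "in_piece k \<tau> (indexing k \<tau> h \<beta>2) \<alpha>2" and "1 \<le> indexing k \<tau> h \<beta>2"
      unfolding P_def by blast
    obtain \<alpha>1 where max1: "\<forall>a. \<beta>1 * a - h a \<le> \<beta>1 * \<alpha>1 - h \<alpha>1"
      using attained by blast
    have "\<alpha>1 \<le> \<alpha>2"
      using conjugate_argmax_mono[OF \<open>\<beta>1 < \<beta>2\<close>] max1 max2 by blast
    obtain i where "1 \<le> i" "i \<le> k" "in_piece k \<tau> i \<alpha>1"
      and first: "\<And>j. 1 \<le> j \<Longrightarrow> j = k \<or> \<alpha>1 \<le> \<tau> j \<Longrightarrow> i \<le> j"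
      using first_piece_containing[OF \<open>1 \<le> k\<close>, where \<tau> = \<tau> and a = \<alpha>1] by blast
    have "indexing k \<tau> h \<beta>1 \<le> i"
      unfolding indexing_eq
      by (rule Least_le) (use \<open>1 \<le> i\<close> \<open>i \<le> k\<close> \<open>in_piece k \<tau> i \<alpha>1\<close> max1 in \<open>auto simp: P_def\<close>)
    also have "i \<le> indexing k \<tau> h \<beta>2"
      using first \<open>1 \<le> indexing k \<tau> h \<beta>2\<close> piece2 \<open>\<alpha>1 \<le> \<alpha>2\<close>
      unfolding in_piece_def by fastforce
    finally show ?thesis .
  qed simp
qed

lemma piecewise_quadratic_breakpoints_mono:
  assumes "piecewise_quadratic g N \<tau> p" "1 \<le> i" "i \<le> j" "j < N"
  shows "\<tau> i \<le> \<tau> j"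
proof (rule lift_Suc_mono_le_ivl[where N = "{1..<N - 1}"])
  show "\<tau> n \<le> \<tau> (Suc n)" if "n \<in> {1..<N - 1}" for n
    using assms(1) that unfolding piecewise_quadratic_def by force
qed (use assms in auto)

lemma piecewise_quadratic_piece_nonempty:
  assumes "piecewise_quadratic g N \<tau> p" "k \<le> N" "j \<in> {1..k}"
  shows "\<exists>\<alpha>. in_piece k \<tau> j \<alpha>"
proof (cases "j = k")
  case False
  have "\<tau> (j - 1) < \<tau> (j - 1 + 1)" if "j \<noteq> 1"
  proof -
    have "1 \<le> j - 1 \<and> j - 1 + 1 \<le> N - 1"
      using False that assms(2,3) by auto
    with assms(1) show ?thesis
      unfolding piecewise_quadratic_def by blast
  qed
  then have "j = 1 \<or> \<tau> (j - 1) < \<tau> j"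
    using assms(3) by force
  then have "in_piece k \<tau> j (\<tau> j)"
    unfolding in_piece_def by auto
  then show ?thesis ..
qed (auto simp: in_piece_def)

lemma truncate_eq_piece:
  assumes pq: "piecewise_quadratic g N \<tau> p" and "k \<in> {1..N}" "j \<in> {1..k}"
    and piece: "in_piece k \<tau> j a"
  shows "truncate g N \<tau> p k a = p j a"
proof (cases "k < N \<and> \<tau> k < a")
  case True
  have "j = k"
  proof (rule ccontr)
    assume "j \<noteq> k"
    with piece have "a \<le> \<tau> j"
      by (simp add: in_piece_def)
    also have "\<tau> j \<le> \<tau> k"
      using piecewise_quadratic_breakpoints_mono[OF pq] assms(3) True by auto
    finally show False
      using True by simp
  qed
  with True show ?thesis
    by (simp add: truncate_def)
next
  case False
  with assms have "in_piece N \<tau> j a"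
    unfolding in_piece_def by auto
  with False pq assms(2,3) show ?thesis
    unfolding truncate_def piecewise_quadratic_def by auto
qed

lemma consistent_piece_le_neighbours:
  assumes "consistent g N \<tau> p" "2 \<le> k" "k \<le> N - 1" "\<tau> (k - 1) \<le> \<alpha>" "\<alpha> \<le> \<tau> k"
  shows "p k \<alpha> \<le> min (p (k - 1) \<alpha>) (p (k + 1) \<alpha>)"
proof -
  have g_min: "g \<alpha> = Min ((\<lambda>j. p j \<alpha>) ` {1..N})" and pq: "piecewise_quadratic g N \<tau> p"
    using assms(1) by (auto simp: consistent_def)
  have "g \<alpha> \<le> p j \<alpha>" if "j \<in> {1..N}" for j
    using that by (simp add: g_min)
  moreover have "g \<alpha> = p k \<alpha>"
    using pq assms(2-5) unfolding piecewise_quadratic_def in_piece_def by auto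
  moreover have "k - 1 \<in> {1..N}" "k + 1 \<in> {1..N}"
    using assms(2,3) by auto
  ultimately show ?thesis
    by (metis min.boundedI)
qed

theorem lemma8:
  fixes g :: "real \<Rightarrow> real" and N :: nat and \<tau> :: "nat \<Rightarrow> real"
    and p :: "nat \<Rightarrow> real \<Rightarrow> real"
  assumes "consistent g N \<tau> p"
  shows "semi_consistent g N \<tau> p"
proof -
  have pq: "piecewise_quadratic g N \<tau> p" and convex: "\<forall>k\<in>{1..N}. strongly_convex (p k)"
    using assms by (auto simp: consistent_def)
  have "mono (indexing k \<tau> (truncate g N \<tau> p k))" if k: "k \<in> {1..N}" for k
  proof (rule mono_indexing)
    show "1 \<le> k"
      using k by simp
    show "\<exists>\<alpha>. \<forall>a. \<beta> * a - truncate g N \<tau> p k a \<le> \<beta> * \<alpha> - truncate g N \<tau> p k \<alpha>" for \<beta>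
    proof (rule piecewise_conjugate_attains_max)
      show "truncate g N \<tau> p k a = p j a" if "j \<in> {1..k}" "in_piece k \<tau> j a" for j a
        using truncate_eq_piece[OF pq k that] .
      show "quadratic (p j) \<and> strongly_convex (p j)" if "j \<in> {1..k}" for j
        using pq convex k that unfolding piecewise_quadratic_def by auto
      show "\<exists>\<alpha>. in_piece k \<tau> j \<alpha>" if "j \<in> {1..k}" for j
        using piecewise_quadratic_piece_nonempty[OF pq _ that] k by simp
    qed (use k in auto)
  qed
  then show ?thesis
    unfolding semi_consistent_def
    using pq convex consistent_piece_le_neighbours[OF assms] by blast
qed

end
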